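(* Let $N$ be a positive integer, and let $\bar{\mathcal A}\subset\mathbb C^N\setminus\{\mathbf 0\}$ and $\bar{\mathcal B}_1\subset\mathcal H_{++}^N$ be convex and closed. Let $(\mathbf a^\star,\mathbf R_1^\star)$ be an optimal solution of the convex problem $$\min_{\mathbf a\in\bar{\mathcal A},\ \mathbf R_1\in\bar{\mathcal B}_1}\ \mathbf a^H\mathbf R_1^{-1}\mathbf a,$$ and let $\mathbf w^\star=\mathbf R_1^{\star-1}\mathbf a^\star/\|\mathbf R_1^{\star-1/2}\mathbf a^\star\|$. Then $$\mathbf w^{\star H}\mathbf a^\star\mathbf a^{\star H}\mathbf w^\star=\max_{\mathbf w\ne\mathbf 0}\ \min_{\mathbf a\in\bar{\mathcal A},\ \mathbf R_1\in\bar{\mathcal B}_1}\frac{\mathbf w^H\mathbf a\mathbf a^H\mathbf w}{\mathbf w^H\mathbf R_1\mathbf w}=\min_{\mathbf a\in\bar{\mathcal A},\ \mathbf R_1\in\bar{\mathcal B}_1}\ \max_{\mathbf w\ne\mathbf 0}\frac{\mathbf w^H\mathbf a\mathbf a^H\mathbf w}{\mathbf w^H\mathbf R_1\mathbf w}.$$ Moreover, $(\mathbf w^\star,\mathbf a^\star,\mathbf R_1^\star)$ is an optimal solution of both the maximin and the minimax problems.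
   Context: $\mathcal H_{++}^N$ is the set of $N\times N$ Hermitian positive definite matrices; $\mathbf R^{-1/2}$ is the Hermitian positive definite inverse square root; $\|\cdot\|$ is the Euclidean norm. *)

theory Defs
  imports "HOL-Analysis.Analysis"
begin

text \<open>Complex N-vectors are \<open>complex ^ 'n\<close>, N x N complex matrices are \<open>complex ^ 'n ^ 'n\<close>,
  with N = CARD('n) arbitrary (positive).\<close>

definition hdot :: "complex ^ 'n \<Rightarrow> complex ^ 'n \<Rightarrow> complex" where
  "hdot w a = (\<Sum>i\<in>UNIV. cnj (w $ i) * a $ i)"

definition cadj :: "complex ^ 'n ^ 'n \<Rightarrow> complex ^ 'n ^ 'n" where
  "cadj R = (\<chi> i j. cnj (R $ j $ i))"

definition hermitian_mat :: "complex ^ 'n ^ 'n \<Rightarrow> bool" where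
  "hermitian_mat R \<longleftrightarrow> cadj R = R"

definition hpd_mat :: "complex ^ 'n ^ 'n \<Rightarrow> bool" where
  "hpd_mat R \<longleftrightarrow> hermitian_mat R \<and> (\<forall>x. x \<noteq> 0 \<longrightarrow> Re (hdot x (R *v x)) > 0)"

definition Hpp :: "(complex ^ 'n ^ 'n) set" where
  "Hpp = {R. hpd_mat R}"

definition inv_sqrt_mat :: "complex ^ 'n ^ 'n \<Rightarrow> complex ^ 'n ^ 'n" where
  "inv_sqrt_mat R = (THE S. hpd_mat S \<and> S ** S = matrix_inv R)"

definition obj :: "complex ^ 'n \<Rightarrow> complex ^ 'n ^ 'n \<Rightarrow> real" where
  "obj a R = Re (hdot a (matrix_inv R *v a))"

definition ratio :: "complex ^ 'n \<Rightarrow> complex ^ 'n \<Rightarrow> complex ^ 'n ^ 'n \<Rightarrow> real" where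
  "ratio w a R = Re (hdot w a * hdot a w) / Re (hdot w (R *v w))"

end

theory Submission
  imports Defs
begin

(*
  For fixed (a, R), Cauchy-Schwarz in the inner product of R shows that the generalised
  Rayleigh quotient w^H a a^H w / w^H R w is maximised by w = R^-1 a, with value
  a^H R^-1 a; so the minimax value is the optimum t of the convex problem.  Conversely, for
  w = R0^-1 a0, moving the optimum (a0, R0) a little towards any feasible (a, R) shows to first
  order that 2 Re (w^H a) >= t + w^H R w, and AM-GM turns this into
  w^H a a^H w >= t w^H R w.  Hence (w, a0, R0) is a saddle point of the quotient, and the
  maximin value equals the minimax value t.  Normalising by ||R0^-1/2 a0|| only makes
  w^H R0 w = 1; the Hermitian positive definite square root behind R^-1/2 exists and is unique
  by the spectral theorem for self-adjoint operators.
*)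

lemma nonneg_of_nonneg_plus_linear:
  fixes s c \<delta> :: real
  assumes "0 < \<delta>" and "\<And>\<epsilon>. 0 < \<epsilon> \<Longrightarrow> \<epsilon> < \<delta> \<Longrightarrow> 0 \<le> s + \<epsilon> * c"
  shows "0 \<le> s"
proof (rule tendsto_lowerbound)
  show "((\<lambda>\<epsilon>. s + \<epsilon> * c) \<longlongrightarrow> s) (at_right 0)"
    by (auto intro!: tendsto_eq_intros)
  show "\<forall>\<^sub>F \<epsilon> in at_right 0. 0 \<le> s + \<epsilon> * c"
    using eventually_at_right_real[OF assms(1)] by eventually_elim (use assms(2) in auto)
qed simp

lemma mult_le_of_sq_le_mult:
  fixes \<theta> P Q E :: real
  assumes PQ: "P\<^sup>2 \<le> E * Q" and Q: "0 \<le> Q" and E: "0 \<le> E"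
  shows "2 * \<theta> * P \<le> Q / 2 + 2 * \<theta>\<^sup>2 * E"
proof (cases "Q = 0")
  case True
  thus ?thesis using PQ E by simp
next
  case False
  hence Q: "0 < Q" using Q by simp
  have "Q / 2 + 2 * \<theta>\<^sup>2 * (P\<^sup>2 / Q) - 2 * \<theta> * P = 2 * (Q / 2 - \<theta> * P)\<^sup>2 / Q"
    using Q by (simp add: field_simps power2_eq_square)
  moreover have "0 \<le> 2 * (Q / 2 - \<theta> * P)\<^sup>2 / Q" using Q by simp
  ultimately have "2 * \<theta> * P \<le> Q / 2 + 2 * \<theta>\<^sup>2 * (P\<^sup>2 / Q)" by linarith
  also have "\<dots> \<le> Q / 2 + 2 * \<theta>\<^sup>2 * E"
    using Q PQ by (intro add_left_mono mult_left_mono) (simp_all add: pos_divide_le_eq mult.commute)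
  finally show ?thesis .
qed

section \<open>Self-adjoint operators on Euclidean spaces\<close>

definition self_adjoint :: "('a::real_inner \<Rightarrow> 'a) \<Rightarrow> bool" where
  "self_adjoint f \<longleftrightarrow> linear f \<and> (\<forall>x y. f x \<bullet> y = x \<bullet> f y)"

definition positive_definite :: "('a::real_inner \<Rightarrow> 'a) \<Rightarrow> bool" where
  "positive_definite f \<longleftrightarrow> self_adjoint f \<and> (\<forall>x. x \<noteq> 0 \<longrightarrow> 0 < x \<bullet> f x)"

lemma rayleigh_maximiser_exists:
  fixes f :: "'a::euclidean_space \<Rightarrow> 'a"
  assumes lin: "linear f" and V: "subspace V" and ne: "V \<noteq> {0}"
  obtains v where "v \<in> V" "norm v = 1" "\<And>y. y \<in> V \<Longrightarrow> y \<bullet> f y \<le> (v \<bullet> f v) * (y \<bullet> y)"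
proof -
  let ?K = "V \<inter> sphere 0 1"
  obtain x where x: "x \<in> V" "x \<noteq> 0" using ne V subspace_0 by blast
  have "(1 / norm x) *\<^sub>R x \<in> ?K" using x V by (simp add: subspace_scale)
  moreover have "continuous_on ?K (\<lambda>x. x \<bullet> f x)"
    using lin by (intro continuous_intros linear_continuous_on) (auto simp: linear_conv_bounded_linear)
  moreover have "compact ?K" by (simp add: V closed_subspace closed_Int_compact)
  ultimately obtain v where v: "v \<in> ?K" and vmax: "\<And>y. y \<in> ?K \<Longrightarrow> y \<bullet> f y \<le> v \<bullet> f v"
    using continuous_attains_sup[of ?K "\<lambda>x. x \<bullet> f x"] by blast
  have "y \<bullet> f y \<le> (v \<bullet> f v) * (y \<bullet> y)" if "y \<in> V" for y
  proof (cases "y = 0")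
    case True thus ?thesis using lin by (simp add: linear_0)
  next
    case False
    let ?y = "(1 / norm y) *\<^sub>R y"
    have "?y \<in> ?K" using False that V by (simp add: subspace_scale)
    hence "?y \<bullet> f ?y \<le> v \<bullet> f v" by (rule vmax)
    moreover have "?y \<bullet> f ?y = (y \<bullet> f y) / (norm y)\<^sup>2"
      using lin by (simp add: linear_scale power2_eq_square)
    ultimately have "(y \<bullet> f y) / (norm y)\<^sup>2 \<le> v \<bullet> f v" by simp
    thus ?thesis using False by (simp add: pos_divide_le_eq dot_square_norm)
  qed
  with v show ?thesis by (intro that) auto
qed

lemma rayleigh_maximiser_eigenvector:
  fixes f :: "'a::euclidean_space \<Rightarrow> 'a"
  assumes f: "self_adjoint f" and V: "subspace V" and inv: "f ` V \<subseteq> V"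
    and v: "v \<in> V" "norm v = 1" and max: "\<And>y. y \<in> V \<Longrightarrow> y \<bullet> f y \<le> (v \<bullet> f v) * (y \<bullet> y)"
  shows "f v = (v \<bullet> f v) *\<^sub>R v"
proof -
  have lin: "linear f" and sa: "\<And>x y. f x \<bullet> y = x \<bullet> f y"
    using f by (auto simp: self_adjoint_def)
  define l where "l = v \<bullet> f v"
  define z where "z = f v - l *\<^sub>R v"
  have vv: "v \<bullet> v = 1" using v by (simp add: dot_square_norm)
  have zV: "z \<in> V" unfolding z_def using inv v V
    by (meson image_subset_iff subspace_diff subspace_scale)
  have vz: "v \<bullet> z = 0" and zfv: "z \<bullet> f v = z \<bullet> z"
    using vv by (auto simp: z_def l_def inner_diff_right inner_diff_left inner_commute)
  \<comment> \<open>moving \<open>v\<close> along \<open>z\<close> cannot increase the Rayleigh quotient to first order\<close>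
  have perturb: "0 \<le> - 2 * (z \<bullet> z) + \<epsilon> * (l * (z \<bullet> z) - z \<bullet> f z)" if "0 < \<epsilon>" for \<epsilon>
  proof -
    have "v + \<epsilon> *\<^sub>R z \<in> V" using v zV V by (simp add: subspace_add subspace_scale)
    from max[OF this]
    have "l + 2 * \<epsilon> * (z \<bullet> z) + \<epsilon>\<^sup>2 * (z \<bullet> f z) \<le> l * (1 + \<epsilon>\<^sup>2 * (z \<bullet> z))"
      using lin sa[of z v] vv vz zfv
      by (simp add: linear_add linear_scale inner_add_left inner_add_right inner_commute
          power2_eq_square algebra_simps l_def)
    hence "\<epsilon> * (2 * (z \<bullet> z) + \<epsilon> * (z \<bullet> f z - l * (z \<bullet> z))) \<le> 0"
      by (simp add: algebra_simps power2_eq_square)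
    hence "2 * (z \<bullet> z) + \<epsilon> * (z \<bullet> f z - l * (z \<bullet> z)) \<le> 0"
      using that by (simp add: mult_le_0_iff)
    thus ?thesis by (simp add: algebra_simps)
  qed
  have "0 \<le> - 2 * (z \<bullet> z)" by (rule nonneg_of_nonneg_plus_linear[where \<delta>=1]) (use perturb in auto)
  hence "z \<bullet> z = 0" using inner_ge_zero[of z] by linarith
  thus ?thesis by (simp add: z_def l_def)
qed

lemma self_adjoint_orthogonal_invariant:
  assumes f: "self_adjoint f" and inv: "f ` V \<subseteq> V" and ev: "f v = \<mu> *\<^sub>R v"
  shows "f ` {x\<in>V. v \<bullet> x = 0} \<subseteq> {x\<in>V. v \<bullet> x = 0}"
proof -
  have "v \<bullet> f x = \<mu> * (v \<bullet> x)" for x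
  proof -
    have "v \<bullet> f x = f v \<bullet> x" using f by (simp add: self_adjoint_def)
    thus ?thesis by (simp add: ev)
  qed
  thus ?thesis using inv by auto
qed

lemma self_adjoint_eigenbasis_of_subspace:
  fixes f :: "'a::euclidean_space \<Rightarrow> 'a"
  assumes f: "self_adjoint f"
  shows "subspace V \<Longrightarrow> f ` V \<subseteq> V \<Longrightarrow> \<exists>B. finite B \<and> B \<subseteq> V \<and> pairwise orthogonal B
           \<and> (\<forall>b\<in>B. norm b = 1 \<and> f b = (b \<bullet> f b) *\<^sub>R b) \<and> V \<subseteq> span B"
proof (induction "dim V" arbitrary: V rule: less_induct)
  case less
  show ?case
  proof (cases "V = {0}")
    case True thus ?thesis by (intro exI[of _ "{}"]) auto
  next
    case False
    have lin: "linear f" using f by (simp add: self_adjoint_def)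
    obtain v where vV: "v \<in> V" and nv: "norm v = 1"
      and max: "\<And>y. y \<in> V \<Longrightarrow> y \<bullet> f y \<le> (v \<bullet> f v) * (y \<bullet> y)"
      using rayleigh_maximiser_exists[OF lin less.prems(1) False] by blast
    have ev: "f v = (v \<bullet> f v) *\<^sub>R v"
      by (rule rayleigh_maximiser_eigenvector[OF f less.prems vV nv max])
    define V' where "V' = {x\<in>V. v \<bullet> x = 0}"
    have sub: "subspace V'" using less.prems(1)
      unfolding V'_def subspace_def by (auto simp: inner_add_right)
    have inv: "f ` V' \<subseteq> V'"
      unfolding V'_def by (rule self_adjoint_orthogonal_invariant[OF f less.prems(2) ev])
    have "v \<notin> V'" using nv by (simp add: V'_def dot_square_norm)
    moreover have "V' \<subseteq> V" by (auto simp: V'_def)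
    ultimately have "V' \<subset> V" using vV by blast
    moreover have "span V' = V'" using sub by (simp add: span_eq_iff)
    moreover have "span V = V" using less.prems(1) by (simp add: span_eq_iff)
    ultimately have "dim V' < dim V" using dim_psubset by metis
    from less.hyps[OF this sub inv] obtain B where
      B: "finite B" "B \<subseteq> V'" "pairwise orthogonal B"
          "\<forall>b\<in>B. norm b = 1 \<and> f b = (b \<bullet> f b) *\<^sub>R b" "V' \<subseteq> span B" by blast
    show ?thesis
    proof (intro exI[of _ "insert v B"] conjI)
      show "pairwise orthogonal (insert v B)"
        using B(2,3) by (auto simp: pairwise_insert V'_def orthogonal_def inner_commute)
      show "V \<subseteq> span (insert v B)"
      proof
        fix x assume "x \<in> V"
        hence "x - (v \<bullet> x) *\<^sub>R v \<in> V'"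
          using vV nv less.prems(1) by (simp add: V'_def subspace_diff subspace_scale inner_diff_right dot_square_norm)
        hence "x - (v \<bullet> x) *\<^sub>R v \<in> span (insert v B)" using B(5) span_mono[of B "insert v B"] by auto
        moreover have "(v \<bullet> x) *\<^sub>R v \<in> span (insert v B)" by (simp add: span_base span_scale)
        ultimately have "x - (v \<bullet> x) *\<^sub>R v + (v \<bullet> x) *\<^sub>R v \<in> span (insert v B)" by (rule span_add)
        thus "x \<in> span (insert v B)" by simp
      qed
    qed (use B vV nv ev in \<open>auto simp: V'_def\<close>)
  qed
qed

lemma self_adjoint_eigenbasis:
  fixes f :: "'a::euclidean_space \<Rightarrow> 'a"
  assumes "self_adjoint f"
  obtains B where "finite B" "pairwise orthogonal B" "\<And>b. b \<in> B \<Longrightarrow> norm b = 1"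
    "\<And>b. b \<in> B \<Longrightarrow> f b = (b \<bullet> f b) *\<^sub>R b" "\<And>x. (\<Sum>b\<in>B. (x \<bullet> b) *\<^sub>R b) = x"
proof -
  obtain B where B: "finite B" "pairwise orthogonal B"
     "\<forall>b\<in>B. norm b = 1 \<and> f b = (b \<bullet> f b) *\<^sub>R b" "UNIV \<subseteq> span B"
    using self_adjoint_eigenbasis_of_subspace[OF assms, of UNIV] by auto
  have "(\<Sum>b\<in>B. (x \<bullet> b) *\<^sub>R b) = x" for x
    using orthonormal_basis_expand[of B x] B by auto
  with B show ?thesis by (intro that) blast+
qed

lemma positive_definite_diagonal:
  fixes B :: "'a::euclidean_space set"
  assumes fin: "finite B" and expand: "\<And>x. (\<Sum>b\<in>B. (x \<bullet> b) *\<^sub>R b) = x"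
    and pos: "\<And>b. b \<in> B \<Longrightarrow> 0 < \<sigma> b"
  shows "positive_definite (\<lambda>x. \<Sum>b\<in>B. (\<sigma> b * (x \<bullet> b)) *\<^sub>R b)" (is "positive_definite ?g")
proof -
  have g_inner: "?g x \<bullet> y = (\<Sum>b\<in>B. \<sigma> b * (x \<bullet> b) * (y \<bullet> b))" for x y
    by (simp add: inner_sum_left) (simp add: inner_commute)
  have "linear ?g"
    by (rule linearI) (simp_all add: inner_add_left distrib_left scaleR_add_left sum.distrib
        scaleR_sum_right algebra_simps)
  moreover have "?g x \<bullet> y = x \<bullet> ?g y" for x y
  proof -
    have "?g x \<bullet> y = ?g y \<bullet> x" unfolding g_inner by (simp add: mult_ac)
    thus ?thesis by (metis inner_commute)
  qed
  moreover have "0 < x \<bullet> ?g x" if "x \<noteq> 0" for x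
  proof -
    have "\<exists>b\<in>B. x \<bullet> b \<noteq> 0"
    proof (rule ccontr)
      assume "\<not> ?thesis"
      hence "(\<Sum>b\<in>B. (x \<bullet> b) *\<^sub>R b) = 0" by simp
      thus False using expand[of x] that by simp
    qed
    then obtain b where b: "b \<in> B" "x \<bullet> b \<noteq> 0" by blast
    have "0 < (\<Sum>b\<in>B. \<sigma> b * (x \<bullet> b)\<^sup>2)"
      using b pos by (intro sum_pos2[OF fin b(1)]) (auto simp: zero_less_mult_iff less_imp_le)
    thus ?thesis by (subst inner_commute) (simp add: g_inner power2_eq_square mult.assoc)
  qed
  ultimately show ?thesis by (simp add: positive_definite_def self_adjoint_def)
qed

lemma positive_definite_sqrt_exists:
  fixes f :: "'a::euclidean_space \<Rightarrow> 'a"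
  assumes f: "positive_definite f"
  obtains g where "positive_definite g" "\<And>x. g (g x) = f x"
proof -
  have lin: "linear f" and pos: "\<And>x. x \<noteq> 0 \<Longrightarrow> 0 < x \<bullet> f x"
    using f by (auto simp: positive_definite_def self_adjoint_def)
  obtain B where fin: "finite B" and orth: "pairwise orthogonal B" and unit: "\<And>b. b \<in> B \<Longrightarrow> norm b = 1"
    and eig: "\<And>b. b \<in> B \<Longrightarrow> f b = (b \<bullet> f b) *\<^sub>R b" and expand: "\<And>x. (\<Sum>b\<in>B. (x \<bullet> b) *\<^sub>R b) = x"
    using self_adjoint_eigenbasis f unfolding positive_definite_def by metis
  define \<mu> where "\<mu> b = b \<bullet> f b" for b
  have \<mu>_pos: "0 < \<mu> b" if "b \<in> B" for b
    using pos[of b] unit[OF that] by (force simp: \<mu>_def)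
  define g where "g x = (\<Sum>b\<in>B. (sqrt (\<mu> b) * (x \<bullet> b)) *\<^sub>R b)" for x
  have "positive_definite g"
    unfolding g_def[abs_def] using fin expand \<mu>_pos by (intro positive_definite_diagonal) auto
  moreover have "g (g x) = f x" for x
  proof -
    have inner_B: "b \<bullet> c = (if b = c then 1 else 0)" if "b \<in> B" "c \<in> B" for b c
      using orth unit that by (auto simp: pairwise_def orthogonal_def dot_square_norm)
    have "g x \<bullet> c = sqrt (\<mu> c) * (x \<bullet> c)" if "c \<in> B" for c
      using that fin by (simp add: g_def inner_sum_left inner_B if_distrib cong: if_cong)
    hence "g (g x) = (\<Sum>b\<in>B. (x \<bullet> b) *\<^sub>R (\<mu> b *\<^sub>R b))"
      unfolding g_def[of "g x"] using \<mu>_pos by (intro sum.cong) (simp_all add: less_imp_le)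
    also have "\<dots> = f (\<Sum>b\<in>B. (x \<bullet> b) *\<^sub>R b)"
      using lin eig by (simp add: linear_sum linear_scale \<mu>_def)
    finally show ?thesis by (simp add: expand)
  qed
  ultimately show ?thesis by (rule that)
qed

lemma positive_definite_sqrt_unique:
  fixes g h :: "'a::euclidean_space \<Rightarrow> 'a"
  assumes g: "positive_definite g" and h: "positive_definite h" and gh: "\<And>x. g (g x) = h (h x)"
  shows "g = h"
proof -
  have lg: "linear g" and sg: "\<And>x y. g x \<bullet> y = x \<bullet> g y" and pg: "\<And>x. x \<noteq> 0 \<Longrightarrow> 0 < x \<bullet> g x"
    using g by (auto simp: positive_definite_def self_adjoint_def)
  have lh: "linear h" and sh: "\<And>x y. h x \<bullet> y = x \<bullet> h y" and ph: "\<And>x. x \<noteq> 0 \<Longrightarrow> 0 < x \<bullet> h x"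
    using h by (auto simp: positive_definite_def self_adjoint_def)
  define D where "D x = g x - h x" for x
  have lD: "linear D" unfolding D_def using lg lh by (rule linear_compose_sub)
  have "self_adjoint D"
    using lD sg sh by (simp add: self_adjoint_def D_def inner_diff_left inner_diff_right)
  then obtain B where unit: "\<And>b. b \<in> B \<Longrightarrow> norm b = 1"
    and eig: "\<And>b. b \<in> B \<Longrightarrow> D b = (b \<bullet> D b) *\<^sub>R b" and expand: "\<And>x. (\<Sum>b\<in>B. (x \<bullet> b) *\<^sub>R b) = x"
    using self_adjoint_eigenbasis by metis
  have D_eig: "D b = 0" if b: "b \<in> B" for b
  proof -
    define \<mu> where "\<mu> = b \<bullet> D b"
    have Db: "D b = \<mu> *\<^sub>R b" using eig[OF b] by (simp add: \<mu>_def)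
    \<comment> \<open>\<open>g \<circ> g - h \<circ> h = g \<circ> D + D \<circ> h\<close>, tested against the eigenvector \<open>b\<close> of \<open>D\<close>\<close>
    have "b \<bullet> g (D b) + D b \<bullet> h b = b \<bullet> g (g b) - b \<bullet> h (h b)"
      using sg[of b "h b"] sh[of b "h b"]
      by (simp add: D_def linear_diff[OF lg] inner_diff_left inner_diff_right)
    hence "\<mu> * (b \<bullet> g b + b \<bullet> h b) = 0"
      by (simp add: Db gh linear_scale[OF lg] inner_commute[of b "h b"] algebra_simps)
    moreover have "0 < b \<bullet> g b + b \<bullet> h b"
      using pg ph unit[OF b] by (metis add_pos_pos norm_zero zero_neq_one)
    ultimately show ?thesis by (simp add: Db)
  qed
  have "D x = 0" for x
    using lD D_eig expand[of x] by (metis (no_types, lifting) linear_sum linear_scale scaleR_zero_right sum.neutral)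
  thus ?thesis by (auto simp: D_def fun_eq_iff)
qed

lemma positive_definite_sqrt_commute:
  fixes g U :: "'a::euclidean_space \<Rightarrow> 'a"
  assumes g: "positive_definite g" and U: "orthogonal_transformation U"
    and comm: "\<And>x. g (g (U x)) = U (g (g x))"
  shows "g (U x) = U (g x)"
proof -
  have lg: "linear g" and sg: "\<And>x y. g x \<bullet> y = x \<bullet> g y" and pg: "\<And>x. x \<noteq> 0 \<Longrightarrow> 0 < x \<bullet> g x"
    using g by (auto simp: positive_definite_def self_adjoint_def)
  have UV: "U (inv U y) = y" "inv U (U y) = y" for y
    using orthogonal_transformation_bij[OF U] by (simp_all add: bij_is_surj surj_f_inv_f bij_is_inj inv_f_f)
  have U_inner: "U x \<bullet> U y = x \<bullet> y" for x y
    using U by (simp add: orthogonal_transformation_def)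
  define g' where "g' x = inv U (g (U x))" for x
  \<comment> \<open>conjugating \<open>g\<close> by \<open>U\<close> yields another positive square root of \<open>g \<circ> g\<close>\<close>
  have "positive_definite g'"
  proof -
    have "g' = inv U \<circ> (g \<circ> U)" by (simp add: g'_def fun_eq_iff)
    hence "linear g'"
      using U lg by (simp add: linear_compose orthogonal_transformation_linear orthogonal_transformation_inv)
    moreover have "g' x \<bullet> y = x \<bullet> g' y" for x y
      using U_inner[of "g' x" y] U_inner[of x "g' y"] sg[of "U x" "U y"] by (simp add: g'_def UV)
    moreover have "0 < x \<bullet> g' x" if "x \<noteq> 0" for x
    proof -
      have "U x \<noteq> 0" using that U_inner[of x x] by auto
      thus ?thesis using U_inner[of x "g' x"] pg[of "U x"] by (simp add: g'_def UV)
    qed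
    ultimately show ?thesis by (simp add: positive_definite_def self_adjoint_def)
  qed
  moreover have "g' (g' x) = g (g x)" for x by (simp add: g'_def UV comm)
  ultimately have "g' = g" using g positive_definite_sqrt_unique[of g' g] by blast
  thus ?thesis by (metis UV(1) g'_def)
qed

section \<open>Hermitian positive definite matrices\<close>

lemma hdot_commute: "hdot x y = cnj (hdot y x)"
  by (simp add: hdot_def mult.commute)

lemma inner_eq_Re_hdot: "x \<bullet> y = Re (hdot x y)"
  by (simp add: inner_vec_def hdot_def inner_complex_def Re_sum)

lemma Re_hdot_commute: "Re (hdot x y) = Re (hdot y x)"
  by (subst hdot_commute) simp

lemma hdot_add_left: "hdot (x + y) z = hdot x z + hdot y z"
  and hdot_add_right: "hdot x (y + z) = hdot x y + hdot x z"
  and hdot_diff_left: "hdot (x - y) z = hdot x z - hdot y z"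
  and hdot_diff_right: "hdot x (y - z) = hdot x y - hdot x z"
  and hdot_smult_left: "hdot (c *s x) y = cnj c * hdot x y"
  and hdot_smult_right: "hdot x (c *s y) = c * hdot x y"
  and hdot_zero_left [simp]: "hdot 0 y = 0"
  and hdot_zero_right [simp]: "hdot x 0 = 0"
  by (simp_all add: hdot_def algebra_simps sum.distrib sum_subtractf sum_distrib_left)

lemma scaleR_eq_smult: "r *\<^sub>R x = complex_of_real r *s x"
  by (simp add: vec_eq_iff) (simp add: scaleR_conv_of_real)

lemma hdot_scaleR_left: "hdot (r *\<^sub>R x) y = r * hdot x y"
  and hdot_scaleR_right: "hdot x (r *\<^sub>R y) = r * hdot x y"
  by (simp_all add: scaleR_eq_smult hdot_smult_left hdot_smult_right)

lemma hdot_self_eq_0_iff [simp]: "hdot x x = 0 \<longleftrightarrow> x = 0"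
proof
  assume "hdot x x = 0"
  hence "x \<bullet> x = 0" by (simp add: inner_eq_Re_hdot)
  thus "x = 0" by simp
qed simp

lemma hdot_cadj: "hdot x (A *v y) = hdot (cadj A *v x) y"
proof -
  have "hdot x (A *v y) = (\<Sum>i\<in>UNIV. \<Sum>j\<in>UNIV. cnj (x $ i) * (A $ i $ j * y $ j))"
    by (simp add: hdot_def matrix_vector_mult_def sum_distrib_left)
  also have "\<dots> = (\<Sum>j\<in>UNIV. \<Sum>i\<in>UNIV. cnj (x $ i) * (A $ i $ j * y $ j))"
    by (rule sum.swap)
  also have "\<dots> = hdot (cadj A *v x) y"
    by (simp add: hdot_def matrix_vector_mult_def cadj_def sum_distrib_right sum_distrib_left mult_ac)
  finally show ?thesis .
qed

lemma hermitian_mat_iff_hdot: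
  "hermitian_mat A \<longleftrightarrow> (\<forall>x y. hdot (A *v x) y = hdot x (A *v y))"
proof
  assume "hermitian_mat A"
  thus "\<forall>x y. hdot (A *v x) y = hdot x (A *v y)" by (simp add: hermitian_mat_def hdot_cadj)
next
  assume sym: "\<forall>x y. hdot (A *v x) y = hdot x (A *v y)"
  have "cadj A *v x = A *v x" for x
  proof -
    have "hdot (cadj A *v x) y = hdot (A *v x) y" for y
      using sym by (simp add: hdot_cadj[symmetric])
    hence "hdot (cadj A *v x - A *v x) (cadj A *v x - A *v x) = 0" by (simp add: hdot_diff_left)
    thus ?thesis by simp
  qed
  thus "hermitian_mat A" by (simp add: hermitian_mat_def matrix_eq)
qed

lemma hpd_mat_iff_positive_definite: "hpd_mat M \<longleftrightarrow> positive_definite ((*v) M)"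
proof -
  \<comment> \<open>the real part of the symmetry at \<open>\<i> *s x\<close> is the imaginary part of the symmetry at \<open>x\<close>\<close>
  have "(\<forall>x y. hdot (M *v x) y = hdot x (M *v y)) \<longleftrightarrow> (\<forall>x y. (M *v x) \<bullet> y = x \<bullet> (M *v y))"
  proof (intro iffI allI)
    fix x y assume re: "\<forall>x y. (M *v x) \<bullet> y = x \<bullet> (M *v y)"
    have "Re (hdot (M *v x) y) = Re (hdot x (M *v y))" using re by (simp add: inner_eq_Re_hdot)
    moreover have "Im (hdot (M *v x) y) = Im (hdot x (M *v y))"
      using re[rule_format, of "\<i> *s x" y] by (simp add: inner_eq_Re_hdot vec.scale hdot_smult_left)
    ultimately show "hdot (M *v x) y = hdot x (M *v y)" by (simp add: complex_eq_iff)
  qed (simp add: inner_eq_Re_hdot)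
  thus ?thesis
    by (simp add: hpd_mat_def positive_definite_def self_adjoint_def hermitian_mat_iff_hdot inner_eq_Re_hdot)
qed

lemma hpd_mat_hdot_commute: "hpd_mat R \<Longrightarrow> hdot (R *v x) y = hdot x (R *v y)"
  by (simp add: hpd_mat_def hermitian_mat_iff_hdot)

lemma hpd_mat_pos: "hpd_mat R \<Longrightarrow> x \<noteq> 0 \<Longrightarrow> 0 < Re (hdot x (R *v x))"
  by (simp add: hpd_mat_def)

lemma hpd_mat_nonneg: "hpd_mat R \<Longrightarrow> 0 \<le> Re (hdot x (R *v x))"
  by (cases "x = 0") (auto dest: hpd_mat_pos[of R x])

lemma smult_eq_scaleR_Re_Im: "c *s x = Re c *\<^sub>R x + Im c *\<^sub>R (\<i> *s x)"
proof -
  have "c * z = Re c *\<^sub>R z + Im c *\<^sub>R (\<i> * z)" for z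
    by (subst complex_eq[of c]) (simp add: scaleR_conv_of_real algebra_simps)
  thus ?thesis by (simp add: vec_eq_iff)
qed

lemma matrix_works_complex_linear:
  fixes g :: "complex ^ 'n \<Rightarrow> complex ^ 'n"
  assumes lin: "linear g" and i_comm: "\<And>x. g (\<i> *s x) = \<i> *s g x"
  shows "matrix g *v x = g x"
proof (rule matrix_works)
  have "g (c *s x) = c *s g x" for c x
    using lin by (simp add: smult_eq_scaleR_Re_Im[of c] linear_add linear_scale i_comm)
  moreover have "vector_space ((*s) :: complex \<Rightarrow> complex ^ 'n \<Rightarrow> complex ^ 'n)"
    using matrix_vector_mul_linear_gen[of "0::complex^'n^'n"] by (simp add: Vector_Spaces.linear_iff)
  ultimately show "Vector_Spaces.linear (*s) (*s) g"
    unfolding Vector_Spaces.linear_iff using linear_add[OF lin] by blast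
qed

lemma hpd_mat_sqrt_exists:
  assumes "hpd_mat M"
  obtains S where "hpd_mat S" "S ** S = M"
proof -
  obtain g where g: "positive_definite g" and gg: "\<And>x. g (g x) = M *v x"
    using assms positive_definite_sqrt_exists by (metis hpd_mat_iff_positive_definite)
  have "orthogonal_transformation ((*s) \<i>)"
    by (simp add: orthogonal_transformation_def linear_iff vector_add_ldistrib scaleR_eq_smult
        vector_smult_assoc mult.commute inner_eq_Re_hdot hdot_smult_left hdot_smult_right)
  moreover have "g (g (\<i> *s x)) = \<i> *s g (g x)" for x by (simp add: gg vec.scale)
  ultimately have i_comm: "g (\<i> *s x) = \<i> *s g x" for x
    by (rule positive_definite_sqrt_commute[OF g])
  define S where "S = matrix g"
  have "S *v x = g x" for x
    unfolding S_def using g i_comm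
    by (intro matrix_works_complex_linear) (simp_all add: positive_definite_def self_adjoint_def)
  hence Sg: "(*v) S = g" by (simp add: fun_eq_iff)
  show ?thesis
  proof
    show "hpd_mat S" using g by (simp add: hpd_mat_iff_positive_definite Sg)
    show "S ** S = M" by (simp add: matrix_eq matrix_vector_mul_assoc[symmetric] Sg gg)
  qed
qed

lemma hpd_mat_sqrt_unique:
  assumes "hpd_mat S" "hpd_mat T" "S ** S = T ** T"
  shows "S = T"
proof -
  have "(*v) S = (*v) T"
    using assms positive_definite_sqrt_unique[of "(*v) S" "(*v) T"]
    by (simp add: hpd_mat_iff_positive_definite matrix_vector_mul_assoc)
  thus ?thesis by (simp add: matrix_eq)
qed

lemma hpd_mat_inverse:
  assumes "hpd_mat R"
  shows "R ** matrix_inv R = mat 1" and "matrix_inv R ** R = mat 1"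
proof -
  have "\<forall>x. R *v x = 0 \<longrightarrow> x = 0" using hpd_mat_pos[OF assms] by fastforce
  hence "invertible R" by (simp add: invertible_left_inverse matrix_left_invertible_ker)
  hence "\<exists>A'. R ** A' = mat 1 \<and> A' ** R = mat 1" by (simp add: invertible_def)
  hence "R ** matrix_inv R = mat 1 \<and> matrix_inv R ** R = mat 1"
    unfolding matrix_inv_def by (rule someI_ex)
  thus "R ** matrix_inv R = mat 1" "matrix_inv R ** R = mat 1" by auto
qed

lemma hpd_mat_inv_cancel:
  assumes "hpd_mat R"
  shows "R *v (matrix_inv R *v y) = y" and "matrix_inv R *v (R *v y) = y"
  using hpd_mat_inverse[OF assms] by (simp_all add: matrix_vector_mul_assoc)

lemma hpd_mat_matrix_inv:
  assumes R: "hpd_mat R"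
  shows "hpd_mat (matrix_inv R)"
proof -
  let ?M = "matrix_inv R"
  have "hdot (?M *v x) y = hdot x (?M *v y)" for x y
    using hpd_mat_hdot_commute[OF R, of "?M *v x" "?M *v y"] by (simp add: hpd_mat_inv_cancel[OF R])
  moreover have "0 < Re (hdot x (?M *v x))" if "x \<noteq> 0" for x
  proof -
    have "?M *v x \<noteq> 0" using that hpd_mat_inv_cancel(1)[OF R, of x] by auto
    thus ?thesis using hpd_mat_pos[OF R, of "?M *v x"] hpd_mat_hdot_commute[OF R, of "?M *v x" "?M *v x"] that
      by (simp add: hpd_mat_inv_cancel[OF R])
  qed
  ultimately show ?thesis by (simp add: hpd_mat_def hermitian_mat_iff_hdot)
qed

lemma scaleR_matrix_vector_mult: "(r *\<^sub>R A) *v x = r *\<^sub>R (A *v x)"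
  for A :: "'a::real_algebra_1 ^ 'n ^ 'm"
  by (simp add: vec_eq_iff matrix_vector_mult_def scaleR_sum_right)

lemma hpd_mat_convex_combination:
  assumes A: "hpd_mat A" and B: "hpd_mat B" and "0 \<le> \<theta>" "\<theta> \<le> 1"
  shows "hpd_mat ((1 - \<theta>) *\<^sub>R A + \<theta> *\<^sub>R B)"
proof -
  have mv: "((1 - \<theta>) *\<^sub>R A + \<theta> *\<^sub>R B) *v x = (1 - \<theta>) *\<^sub>R (A *v x) + \<theta> *\<^sub>R (B *v x)" for x
    by (simp add: matrix_vector_mult_add_rdistrib scaleR_matrix_vector_mult)
  have "0 < (1 - \<theta>) * Re (hdot x (A *v x)) + \<theta> * Re (hdot x (B *v x))" if "x \<noteq> 0" for x
    using hpd_mat_pos[OF A that] hpd_mat_pos[OF B that] assms(3,4)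
    by (cases "\<theta> = 1") (auto intro: add_pos_nonneg add_nonneg_pos)
  thus ?thesis
    using hpd_mat_hdot_commute[OF A] hpd_mat_hdot_commute[OF B]
    by (simp add: hpd_mat_def hermitian_mat_iff_hdot mv hdot_add_left hdot_add_right
        hdot_scaleR_left hdot_scaleR_right)
qed

lemma hpd_inv_sqrt_mat:
  assumes "hpd_mat R"
  shows "hpd_mat (inv_sqrt_mat R)" and "inv_sqrt_mat R ** inv_sqrt_mat R = matrix_inv R"
proof -
  obtain S where S: "hpd_mat S" "S ** S = matrix_inv R"
    using hpd_mat_sqrt_exists[OF hpd_mat_matrix_inv[OF assms]] .
  hence "\<exists>!S. hpd_mat S \<and> S ** S = matrix_inv R"
    by (metis hpd_mat_sqrt_unique)
  hence "hpd_mat (inv_sqrt_mat R) \<and> inv_sqrt_mat R ** inv_sqrt_mat R = matrix_inv R"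
    unfolding inv_sqrt_mat_def by (rule theI')
  thus "hpd_mat (inv_sqrt_mat R)" "inv_sqrt_mat R ** inv_sqrt_mat R = matrix_inv R" by auto
qed

lemma norm_inv_sqrt_mat:
  assumes "hpd_mat R"
  shows "(norm (inv_sqrt_mat R *v a))\<^sup>2 = obj a R"
proof -
  let ?S = "inv_sqrt_mat R"
  have "(norm (?S *v a))\<^sup>2 = Re (hdot (?S *v a) (?S *v a))" by (simp add: power2_norm_eq_inner inner_eq_Re_hdot)
  also have "\<dots> = Re (hdot a (?S *v (?S *v a)))"
    by (simp add: hpd_mat_hdot_commute[OF hpd_inv_sqrt_mat(1)[OF assms]])
  also have "\<dots> = obj a R"
    by (simp add: obj_def matrix_vector_mul_assoc hpd_inv_sqrt_mat(2)[OF assms])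
  finally show ?thesis .
qed

section \<open>The convex problem and the Rayleigh quotient\<close>

lemma Re_hdot_mult_hdot: "Re (hdot w a * hdot a w) = (cmod (hdot w a))\<^sup>2"
  by (subst hdot_commute[of a w]) (simp only: complex_norm_square[symmetric] Re_complex_of_real)

lemma quadratic_le_obj:
  assumes R: "hpd_mat R"
  shows "2 * Re (hdot v a) - Re (hdot v (R *v v)) \<le> obj a R"
proof -
  define v0 where "v0 = matrix_inv R *v a"
  have Rv0: "R *v v0 = a" by (simp add: v0_def hpd_mat_inv_cancel[OF R])
  have cross: "Re (hdot v0 (R *v v)) = Re (hdot v a)"
    using hpd_mat_hdot_commute[OF R, of v0 v] Rv0 Re_hdot_commute[of a v] by simp
  have "0 \<le> Re (hdot (v - v0) (R *v (v - v0)))" by (rule hpd_mat_nonneg[OF R])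
  also have "\<dots> = Re (hdot v (R *v v)) - 2 * Re (hdot v a) + Re (hdot v0 a)"
    by (simp add: matrix_vector_mult_diff_distrib hdot_diff_left hdot_diff_right Rv0 cross)
  finally show ?thesis by (simp add: obj_def v0_def Re_hdot_commute[of a])
qed

lemma quadratic_at_inv_eq_obj:
  assumes R: "hpd_mat R"
  shows "2 * Re (hdot (matrix_inv R *v a) a)
           - Re (hdot (matrix_inv R *v a) (R *v (matrix_inv R *v a))) = obj a R"
  by (simp add: hpd_mat_inv_cancel[OF R] obj_def Re_hdot_commute[of a])

lemma obj_nonneg: "hpd_mat R \<Longrightarrow> 0 \<le> obj a R"
  using quadratic_le_obj[of R 0 a] by simp

lemma obj_pos: "hpd_mat R \<Longrightarrow> a \<noteq> 0 \<Longrightarrow> 0 < obj a R"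
  unfolding obj_def by (rule hpd_mat_pos[OF hpd_mat_matrix_inv])

lemma cmod_hdot_sq_le_obj_mult:
  assumes R: "hpd_mat R"
  shows "(cmod (hdot w a))\<^sup>2 \<le> obj a R * Re (hdot w (R *v w))"
proof (cases "w = 0")
  case True thus ?thesis by simp
next
  case False
  define z where "z = hdot w a"
  define q where "q = Re (hdot w (R *v w))"
  have q: "0 < q" using hpd_mat_pos[OF R False] by (simp add: q_def)
  \<comment> \<open>the quadratic lower bound for \<open>obj\<close>, evaluated at the best multiple of \<open>w\<close>\<close>
  define v where "v = (z / q) *s w"
  have "2 * Re (hdot v a) - Re (hdot v (R *v v)) = ((Re z)\<^sup>2 + (Im z)\<^sup>2) / q"
    using q by (simp add: v_def hdot_smult_left hdot_smult_right vec.scale z_def q_def[symmetric]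
        complex_mult_cnj[symmetric] power2_eq_square field_simps)
  with quadratic_le_obj[OF R, of v a] have "(cmod z)\<^sup>2 / q \<le> obj a R" by (simp add: cmod_power2)
  thus ?thesis using q by (simp add: z_def q_def pos_divide_le_eq)
qed

lemma ratio_le_obj: "hpd_mat R \<Longrightarrow> w \<noteq> 0 \<Longrightarrow> ratio w a R \<le> obj a R"
  using cmod_hdot_sq_le_obj_mult[of R w a] hpd_mat_pos[of R w]
  unfolding ratio_def Re_hdot_mult_hdot by (simp add: pos_divide_le_eq)

lemma ratio_nonneg: "hpd_mat R \<Longrightarrow> 0 \<le> ratio w a R"
  using hpd_mat_nonneg[of R w] unfolding ratio_def Re_hdot_mult_hdot by simp

lemma ratio_at_inv_eq_obj:
  assumes R: "hpd_mat R"
  shows "ratio (matrix_inv R *v a) a R = obj a R"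
proof -
  define v where "v = matrix_inv R *v a"
  have Rv: "R *v v = a" by (simp add: v_def hpd_mat_inv_cancel[OF R])
  have "hdot v a = cnj (hdot v a)"
    using hpd_mat_hdot_commute[OF R, of v v] hdot_commute[of "R *v v" v] Rv by simp
  hence "hdot v a = of_real (obj a R)"
    by (simp add: complex_eq_iff obj_def v_def Re_hdot_commute[of a])
  thus ?thesis
    unfolding v_def[symmetric] ratio_def Re_hdot_mult_hdot Rv by (simp add: power2_eq_square)
qed

lemma ratio_smult:
  assumes "c \<noteq> 0"
  shows "ratio (c *s w) a R = ratio w a R"
proof -
  have "hdot (c *s w) a * hdot a (c *s w) = (cnj c * c) * (hdot w a * hdot a w)"
    and "hdot (c *s w) (R *v (c *s w)) = (cnj c * c) * hdot w (R *v w)"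
    by (simp_all add: hdot_smult_left hdot_smult_right vec.scale mult_ac)
  moreover have "cnj c * c = of_real ((cmod c)\<^sup>2)" by (subst complex_norm_square) (simp add: mult.commute)
  ultimately show ?thesis using assms by (simp add: ratio_def)
qed

lemma inv_sqrt_normalized:
  assumes R: "hpd_mat R" and "a \<noteq> 0"
  defines "w \<equiv> (1 / complex_of_real (norm (inv_sqrt_mat R *v a))) *s (matrix_inv R *v a)"
  shows "Re (hdot w (R *v w)) = 1" and "ratio w b S = ratio (matrix_inv R *v a) b S"
proof -
  define n where "n = norm (inv_sqrt_mat R *v a)"
  have n: "n\<^sup>2 = obj a R" "0 < obj a R"
    using norm_inv_sqrt_mat[OF R] obj_pos[OF assms(1,2)] by (simp_all add: n_def)
  have "hdot w (R *v w) = complex_of_real (1 / n\<^sup>2) * hdot a (matrix_inv R *v a)"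
    using hpd_mat_hdot_commute[OF R, of "matrix_inv R *v a" "matrix_inv R *v a"]
    by (simp add: w_def n_def[symmetric] hdot_smult_left hdot_smult_right vec.scale
        hpd_mat_inv_cancel[OF R] power2_eq_square Re_hdot_commute)
  thus "Re (hdot w (R *v w)) = 1" using n by (simp add: obj_def)
  have "n \<noteq> 0" using n by auto
  thus "ratio w b S = ratio (matrix_inv R *v a) b S" by (simp add: w_def n_def[symmetric] ratio_smult)
qed

lemma linear_minus_quadratic_le_obj:
  assumes R0: "hpd_mat R0" and R: "hpd_mat R" and \<theta>: "0 < \<theta>" "\<theta> \<le> 1 / 2"
  shows "2 * \<theta> * Re (hdot u e) - Re (hdot u (((1 - \<theta>) *\<^sub>R R0 + \<theta> *\<^sub>R R) *v u))
           \<le> 2 * \<theta>\<^sup>2 * obj e R0"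
proof -
  define P where "P = Re (hdot u e)"
  define Q where "Q = Re (hdot u (R0 *v u))"
  have Q: "0 \<le> Q" using hpd_mat_nonneg[OF R0] by (simp add: Q_def)
  have "P\<^sup>2 \<le> (cmod (hdot u e))\<^sup>2" by (simp add: P_def cmod_power2)
  also have "\<dots> \<le> obj e R0 * Q" unfolding Q_def by (rule cmod_hdot_sq_le_obj_mult[OF R0])
  finally have "2 * \<theta> * P \<le> Q / 2 + 2 * \<theta>\<^sup>2 * obj e R0"
    using mult_le_of_sq_le_mult Q obj_nonneg[OF R0] by blast
  moreover have "\<theta> * Q \<le> Q / 2" using \<theta> Q mult_right_mono[of \<theta> "1/2" Q] by simp
  moreover have "Re (hdot u (((1 - \<theta>) *\<^sub>R R0 + \<theta> *\<^sub>R R) *v u)) = (1 - \<theta>) * Q + \<theta> * Re (hdot u (R *v u))"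
    by (simp add: matrix_vector_mult_add_rdistrib scaleR_matrix_vector_mult hdot_add_right hdot_scaleR_right Q_def)
  moreover have "0 \<le> \<theta> * Re (hdot u (R *v u))" using \<theta> hpd_mat_nonneg[OF R] by simp
  ultimately show ?thesis by (simp add: P_def algebra_simps)
qed

lemma obj_convex_combination_le:
  fixes a0 a :: "complex ^ 'n" and R0 R :: "complex ^ 'n ^ 'n"
  assumes R0: "hpd_mat R0" and R: "hpd_mat R" and \<theta>: "0 < \<theta>" "\<theta> \<le> 1 / 2"
  defines "w \<equiv> matrix_inv R0 *v a0"
  shows "obj ((1 - \<theta>) *\<^sub>R a0 + \<theta> *\<^sub>R a) ((1 - \<theta>) *\<^sub>R R0 + \<theta> *\<^sub>R R)
    \<le> obj a0 R0 + \<theta> * (2 * Re (hdot w a) - obj a0 R0 - Re (hdot w (R *v w)))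
      + 2 * \<theta>\<^sup>2 * obj (a - R *v w) R0"
proof -
  define a\<theta> where "a\<theta> = (1 - \<theta>) *\<^sub>R a0 + \<theta> *\<^sub>R a"
  define R\<theta> where "R\<theta> = (1 - \<theta>) *\<^sub>R R0 + \<theta> *\<^sub>R R"
  define t where "t = obj a0 R0"
  define s where "s = 2 * Re (hdot w a) - t - Re (hdot w (R *v w))"
  define e where "e = a - R *v w"
  define u where "u = matrix_inv R\<theta> *v a\<theta> - w"
  have R\<theta>: "hpd_mat R\<theta>" unfolding R\<theta>_def using R0 R \<theta> by (intro hpd_mat_convex_combination) auto
  have R\<theta>_mv: "R\<theta> *v x = (1 - \<theta>) *\<^sub>R (R0 *v x) + \<theta> *\<^sub>R (R *v x)" for x
    by (simp add: R\<theta>_def matrix_vector_mult_add_rdistrib scaleR_matrix_vector_mult)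
  have R0w: "R0 *v w = a0" by (simp add: w_def hpd_mat_inv_cancel[OF R0])
  have wa0: "Re (hdot w a0) = t" by (simp add: t_def obj_def w_def Re_hdot_commute[of a0])
  \<comment> \<open>expand the quadratic form of \<open>obj a\<theta> R\<theta>\<close> around \<open>w\<close>, the maximiser for \<open>\<theta> = 0\<close>\<close>
  have "obj a\<theta> R\<theta> = 2 * Re (hdot (w + u) a\<theta>) - Re (hdot (w + u) (R\<theta> *v (w + u)))"
    using quadratic_at_inv_eq_obj[OF R\<theta>, of a\<theta>] by (simp add: u_def)
  also have "\<dots> = (2 * Re (hdot w a\<theta>) - Re (hdot w (R\<theta> *v w)))
                    + 2 * Re (hdot u (a\<theta> - R\<theta> *v w)) - Re (hdot u (R\<theta> *v u))"
    using hpd_mat_hdot_commute[OF R\<theta>, of w u] Re_hdot_commute[of "R\<theta> *v w" u]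
    by (simp add: hdot_add_left hdot_add_right hdot_diff_right matrix_vector_right_distrib)
  also have "2 * Re (hdot w a\<theta>) - Re (hdot w (R\<theta> *v w)) = t + \<theta> * s"
    by (simp add: a\<theta>_def R\<theta>_mv R0w hdot_add_right hdot_scaleR_right) (simp add: wa0 s_def algebra_simps)
  also have "a\<theta> - R\<theta> *v w = \<theta> *\<^sub>R e"
    by (simp add: a\<theta>_def R\<theta>_mv R0w e_def algebra_simps)
  finally have "obj a\<theta> R\<theta> = t + \<theta> * s + (2 * \<theta> * Re (hdot u e) - Re (hdot u (R\<theta> *v u)))"
    by (simp add: hdot_scaleR_right)
  also have "\<dots> \<le> t + \<theta> * s + 2 * \<theta>\<^sup>2 * obj e R0"
    using linear_minus_quadratic_le_obj[OF R0 R \<theta>, of u e] by (simp add: R\<theta>_def)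
  finally show ?thesis by (simp add: a\<theta>_def R\<theta>_def t_def s_def e_def)
qed

lemma optimal_first_order:
  fixes A :: "(complex ^ 'n) set" and B :: "(complex ^ 'n ^ 'n) set"
  assumes A: "convex A" and B: "convex B" "B \<subseteq> Hpp"
    and a0: "a0 \<in> A" and R0: "R0 \<in> B" and opt: "\<forall>a\<in>A. \<forall>R\<in>B. obj a0 R0 \<le> obj a R"
    and a: "a \<in> A" and R: "R \<in> B"
  defines "w \<equiv> matrix_inv R0 *v a0"
  shows "obj a0 R0 + Re (hdot w (R *v w)) \<le> 2 * Re (hdot w a)"
proof -
  define s where "s = 2 * Re (hdot w a) - obj a0 R0 - Re (hdot w (R *v w))"
  define E where "E = obj (a - R *v w) R0"
  have perturb: "0 \<le> s + \<theta> * (2 * E)" if \<theta>: "0 < \<theta>" "\<theta> < 1 / 2" for \<theta>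
  proof -
    have "obj a0 R0 \<le> obj ((1 - \<theta>) *\<^sub>R a0 + \<theta> *\<^sub>R a) ((1 - \<theta>) *\<^sub>R R0 + \<theta> *\<^sub>R R)"
      using opt convexD[OF A a0 a] convexD[OF B(1) R0 R] \<theta> by simp
    also have "\<dots> \<le> obj a0 R0 + \<theta> * s + 2 * \<theta>\<^sup>2 * E"
      using obj_convex_combination_le[of R0 R \<theta> a0 a] B(2) R0 R \<theta>
      by (auto simp: Hpp_def s_def E_def w_def)
    finally have "0 \<le> \<theta> * (s + \<theta> * (2 * E))" by (simp add: algebra_simps power2_eq_square)
    thus ?thesis using \<theta> by (simp add: zero_le_mult_iff)
  qed
  have "0 \<le> s" by (rule nonneg_of_nonneg_plus_linear[where \<delta>="1/2"]) (use perturb in auto)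
  thus ?thesis by (simp add: s_def)
qed

lemma optimal_obj_le_ratio:
  fixes A :: "(complex ^ 'n) set" and B :: "(complex ^ 'n ^ 'n) set"
  assumes A: "convex A" and B: "convex B" "B \<subseteq> Hpp"
    and a0: "a0 \<in> A" and R0: "R0 \<in> B" and opt: "\<forall>a\<in>A. \<forall>R\<in>B. obj a0 R0 \<le> obj a R"
    and a: "a \<in> A" and R: "R \<in> B"
  shows "obj a0 R0 \<le> ratio (matrix_inv R0 *v a0) a R"
proof -
  define w where "w = matrix_inv R0 *v a0"
  define t where "t = obj a0 R0"
  define q where "q = Re (hdot w (R *v w))"
  have hR0: "hpd_mat R0" and hR: "hpd_mat R" using B(2) R0 R by (auto simp: Hpp_def)
  show ?thesis
  proof (cases "w = 0")
    case True
    hence "t = 0" by (simp add: t_def obj_def w_def)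
    thus ?thesis using ratio_nonneg[OF hR] by (simp add: t_def)
  next
    case False
    have q: "0 < q" using hpd_mat_pos[OF hR False] by (simp add: q_def)
    have "t + q \<le> 2 * Re (hdot w a)"
      using optimal_first_order[OF A B a0 R0 opt a R] by (simp add: t_def q_def w_def)
    have "t * q \<le> ((t + q) / 2)\<^sup>2"
      using zero_le_power2[of "(t - q) / 2"] by (simp add: power2_eq_square field_simps)
    also have "\<dots> \<le> (Re (hdot w a))\<^sup>2"
      using \<open>t + q \<le> _\<close> q obj_nonneg[OF hR0, of a0] by (intro power_mono) (auto simp: t_def)
    also have "\<dots> \<le> (cmod (hdot w a))\<^sup>2" by (simp add: cmod_power2)
    finally show ?thesis
      using q unfolding ratio_def Re_hdot_mult_hdot by (simp add: pos_le_divide_eq t_def q_def w_def)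
  qed
qed

section \<open>Saddle point\<close>

lemma saddle_point_value:
  fixes f :: "'a \<Rightarrow> 'b \<Rightarrow> real"
  assumes x0: "x0 \<in> X" and y0: "y0 \<in> Y"
    and max_x0: "\<And>x. x \<in> X \<Longrightarrow> f x y0 \<le> f x0 y0" and min_y0: "\<And>y. y \<in> Y \<Longrightarrow> f x0 y0 \<le> f x0 y"
    and bdd_below_X: "\<And>x. x \<in> X \<Longrightarrow> bdd_below (f x ` Y)"
    and bdd_above_Y: "\<And>y. y \<in> Y \<Longrightarrow> bdd_above ((\<lambda>x. f x y) ` X)"
  shows "(INF y\<in>Y. f x0 y) = f x0 y0" and "(SUP x\<in>X. f x y0) = f x0 y0"
    and "\<And>x. x \<in> X \<Longrightarrow> (INF y\<in>Y. f x y) \<le> f x0 y0"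
    and "\<And>y. y \<in> Y \<Longrightarrow> f x0 y0 \<le> (SUP x\<in>X. f x y)"
    and "(SUP x\<in>X. INF y\<in>Y. f x y) = f x0 y0" and "(INF y\<in>Y. SUP x\<in>X. f x y) = f x0 y0"
proof -
  show inf0: "(INF y\<in>Y. f x0 y) = f x0 y0"
    by (rule cInf_eq_minimum) (use y0 min_y0 in auto)
  show sup0: "(SUP x\<in>X. f x y0) = f x0 y0"
    by (rule cSup_eq_maximum) (use x0 max_x0 in auto)
  show inf_le: "(INF y\<in>Y. f x y) \<le> f x0 y0" if "x \<in> X" for x
    by (rule cINF_lower2[OF bdd_below_X[OF that] y0 max_x0[OF that]])
  show sup_ge: "f x0 y0 \<le> (SUP x\<in>X. f x y)" if "y \<in> Y" for y
    by (rule cSUP_upper2[OF bdd_above_Y[OF that] x0 min_y0[OF that]])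
  show "(SUP x\<in>X. INF y\<in>Y. f x y) = f x0 y0"
    by (rule cSup_eq_maximum) (use x0 inf0 inf_le in \<open>auto intro!: rev_image_eqI\<close>)
  show "(INF y\<in>Y. SUP x\<in>X. f x y) = f x0 y0"
    by (rule cInf_eq_minimum) (use y0 sup0 sup_ge in \<open>auto intro!: rev_image_eqI\<close>)
qed

theorem corollary1:
  fixes A :: "(complex ^ 'n) set" and B :: "(complex ^ 'n ^ 'n) set"
    and a0 :: "complex ^ 'n" and R0 :: "complex ^ 'n ^ 'n" and w0 :: "complex ^ 'n"
  assumes A_sub: "A \<subseteq> - {0}" and A_convex: "convex A" and A_closed: "closed A"
    and B_sub: "B \<subseteq> Hpp" and B_convex: "convex B" and B_closed: "closed B"
    and a0_in: "a0 \<in> A" and R0_in: "R0 \<in> B"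
    and opt: "\<forall>a\<in>A. \<forall>R\<in>B. obj a0 R0 \<le> obj a R"
    and w0_def: "w0 = (1 / complex_of_real (norm (inv_sqrt_mat R0 *v a0))) *s (matrix_inv R0 *v a0)"
  shows
    "Re (hdot w0 a0 * hdot a0 w0)
       = (SUP w\<in>{w. w \<noteq> 0}. INF p\<in>A \<times> B. ratio w (fst p) (snd p))
     \<and> Re (hdot w0 a0 * hdot a0 w0)
       = (INF p\<in>A \<times> B. SUP w\<in>{w. w \<noteq> 0}. ratio w (fst p) (snd p))
     \<comment> \<open>(w0, a0, R0) solves the maximin problem\<close>
     \<and> w0 \<noteq> 0
     \<and> (\<forall>w. w \<noteq> 0 \<longrightarrow> (INF p\<in>A \<times> B. ratio w (fst p) (snd p)) \<le> (INF p\<in>A \<times> B. ratio w0 (fst p) (snd p)))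
     \<and> (\<forall>a\<in>A. \<forall>R\<in>B. ratio w0 a0 R0 \<le> ratio w0 a R)
     \<and> ratio w0 a0 R0 = Re (hdot w0 a0 * hdot a0 w0)
     \<comment> \<open>(w0, a0, R0) solves the minimax problem\<close>
     \<and> (\<forall>a\<in>A. \<forall>R\<in>B. (SUP w\<in>{w. w \<noteq> 0}. ratio w a0 R0) \<le> (SUP w\<in>{w. w \<noteq> 0}. ratio w a R))
     \<and> (\<forall>w. w \<noteq> 0 \<longrightarrow> ratio w a0 R0 \<le> ratio w0 a0 R0)"
proof -
  \<comment> \<open>closedness of \<open>A\<close> and \<open>B\<close> only serves the existence of the optimum, which is assumed here\<close>
  have hR0: "hpd_mat R0" and hB: "\<And>R. R \<in> B \<Longrightarrow> hpd_mat R"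
    using B_sub R0_in by (auto simp: Hpp_def)
  have "a0 \<noteq> 0" using A_sub a0_in by auto
  note w0 = inv_sqrt_normalized[OF hR0 this, folded w0_def]
  have "w0 \<noteq> 0" using w0(1) by auto
  have ratio_w0: "ratio w0 a0 R0 = Re (hdot w0 a0 * hdot a0 w0)" by (simp add: ratio_def w0(1))
  define f :: "complex ^ 'n \<Rightarrow> (complex ^ 'n) \<times> (complex ^ 'n ^ 'n) \<Rightarrow> real"
    where "f = (\<lambda>w p. ratio w (fst p) (snd p))"
  have w0_max: "f w (a0, R0) \<le> f w0 (a0, R0)" if "w \<in> {w. w \<noteq> 0}" for w
    using ratio_le_obj[OF hR0] that by (simp add: f_def w0(2) ratio_at_inv_eq_obj[OF hR0])
  have a0_R0_min: "f w0 (a0, R0) \<le> f w0 p" if "p \<in> A \<times> B" for p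
    using optimal_obj_le_ratio[OF A_convex B_convex B_sub a0_in R0_in opt] that
    by (auto simp: f_def w0(2) ratio_at_inv_eq_obj[OF hR0])
  have f_bdd_below: "bdd_below (f w ` (A \<times> B))" if "w \<in> {w. w \<noteq> 0}" for w
    using ratio_nonneg[OF hB] by (intro bdd_belowI2[of _ 0]) (auto simp: f_def)
  have f_bdd_above: "bdd_above ((\<lambda>w. f w p) ` {w. w \<noteq> 0})" if "p \<in> A \<times> B" for p
    using ratio_le_obj[OF hB] that by (intro bdd_aboveI2[of _ _ "obj (fst p) (snd p)"]) (auto simp: f_def)
  have "w0 \<in> {w. w \<noteq> 0}" "(a0, R0) \<in> A \<times> B" using \<open>w0 \<noteq> 0\<close> a0_in R0_in by auto
  note saddle = saddle_point_value[where f=f, OF this w0_max a0_R0_min f_bdd_below f_bdd_above]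
  show ?thesis
    using saddle w0_max a0_R0_min ratio_w0 \<open>w0 \<noteq> 0\<close> by (auto simp: f_def)
qed

end
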